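(* Let $\Gamma$ be a group generated by $d$ elements and let $N$ be a $\mathbb{Z}\Gamma$-module generated by $t$ elements as a $\mathbb{Z}\Gamma$-module. Suppose $N_0\le N$ is a $\mathbb{Z}\Gamma$-submodule of finite index $b=|N:N_0|$. Then $N_0$ can be generated by at most $t+(2d+1)\log_2 b$ elements as a $\mathbb{Z}\Gamma$-module. *)

theory Defs
  imports Complex_Main "HOL-Algebra.Generated_Groups"
begin

definition ZG_module :: "('g, 'b) monoid_scheme \<Rightarrow> ('g \<Rightarrow> 'm::ab_group_add \<Rightarrow> 'm) \<Rightarrow> bool" where
  "ZG_module G act \<longleftrightarrow>
     (\<forall>x. act \<one>\<^bsub>G\<^esub> x = x) \<and>
     (\<forall>g\<in>carrier G. \<forall>h\<in>carrier G. \<forall>x. act (g \<otimes>\<^bsub>G\<^esub> h) x = act g (act h x)) \<and>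
     (\<forall>g\<in>carrier G. \<forall>x y. act g (x + y) = act g x + act g y)"

definition ZG_submodule :: "('g, 'b) monoid_scheme \<Rightarrow> ('g \<Rightarrow> 'm::ab_group_add \<Rightarrow> 'm) \<Rightarrow> 'm set \<Rightarrow> bool" where
  "ZG_submodule G act M \<longleftrightarrow>
     0 \<in> M \<and> (\<forall>x\<in>M. \<forall>y\<in>M. x - y \<in> M) \<and> (\<forall>g\<in>carrier G. \<forall>x\<in>M. act g x \<in> M)"

definition ZG_span :: "('g, 'b) monoid_scheme \<Rightarrow> ('g \<Rightarrow> 'm::ab_group_add \<Rightarrow> 'm) \<Rightarrow> 'm set \<Rightarrow> 'm set" where
  "ZG_span G act X = \<Inter>{M. ZG_submodule G act M \<and> X \<subseteq> M}"

definition add_cosets :: "'m::ab_group_add set \<Rightarrow> 'm set set" where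
  "add_cosets N0 = {(\<lambda>y. x + y) ` N0 | x. True}"

end

theory Submission
  imports Defs "HOL-Library.Set_Algebras"
begin

(*
  Grow finite sets R of elements of N0 and Y of the module, keeping the additive span U of Y
  and of the Z G-span of R tight: U meets N0 only inside the Z G-span of R.  An element z outside
  U + N0 is adjoined to Y together with the N0-component a of the least positive multiple n z
  lying in U + N0; the minimality of n preserves tightness, and the number of cosets of N0 met
  by U + N0 at least doubles.  Hence |R| <= |Y| <= log_2 b.  Once U + N0 contains the module
  generators X and the translates s Y by the group generators s, one further element of N0 for
  each of these vectors puts them into U itself, which makes U stable under every s.  As N/N0 is
  finite, s permutes the cosets met by U, so U is stable under s^-1 as well.  Thus U is the whole
  module and N0 = U \<inter> N0 is the Z G-span of R, which gives even t + (d + 1) log_2 b generators.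
*)

section \<open>Additive subgroups and integral spans\<close>

definition add_subgroup :: "'a::ab_group_add set \<Rightarrow> bool" where
  "add_subgroup H \<longleftrightarrow> 0 \<in> H \<and> (\<forall>x\<in>H. \<forall>y\<in>H. x - y \<in> H)"

lemma add_subgroup_zero: "add_subgroup H \<Longrightarrow> 0 \<in> H"
  by (simp add: add_subgroup_def)

lemma add_subgroup_diff: "add_subgroup H \<Longrightarrow> x \<in> H \<Longrightarrow> y \<in> H \<Longrightarrow> x - y \<in> H"
  by (simp add: add_subgroup_def)

lemma add_subgroup_uminus: "add_subgroup H \<Longrightarrow> x \<in> H \<Longrightarrow> - x \<in> H"
  using add_subgroup_diff[of H 0 x] add_subgroup_zero[of H] by simp

lemma add_subgroup_add: "add_subgroup H \<Longrightarrow> x \<in> H \<Longrightarrow> y \<in> H \<Longrightarrow> x + y \<in> H"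
  using add_subgroup_diff[of H x "- y"] add_subgroup_uminus[of H y] by simp

lemma add_subgroup_set_plus:
  assumes "add_subgroup A" "add_subgroup B"
  shows "add_subgroup (A + B)"
  unfolding add_subgroup_def
proof (intro conjI ballI)
  show "0 \<in> A + B"
    using assms by (metis add_0 add_subgroup_zero set_plus_intro)
next
  fix x y assume "x \<in> A + B" "y \<in> A + B"
  then obtain a b a' b' where "a \<in> A" "b \<in> B" "a' \<in> A" "b' \<in> B" "x = a + b" "y = a' + b'"
    by (auto elim!: set_plus_elim)
  then have "x - y = (a - a') + (b - b')" "a - a' \<in> A" "b - b' \<in> B"
    using assms by (simp_all add: add_subgroup_diff)
  then show "x - y \<in> A + B"
    by auto
qed

inductive_set int_span :: "'a::ab_group_add set \<Rightarrow> 'a set" for A where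
  zero: "0 \<in> int_span A"
| base: "a \<in> A \<Longrightarrow> a \<in> int_span A"
| diff: "x \<in> int_span A \<Longrightarrow> y \<in> int_span A \<Longrightarrow> x - y \<in> int_span A"

lemma add_subgroup_int_span: "add_subgroup (int_span A)"
  by (simp add: add_subgroup_def int_span.intros)

lemma int_span_superset: "A \<subseteq> int_span A"
  by (auto intro: int_span.base)

lemma int_span_least:
  assumes "add_subgroup H" "A \<subseteq> H"
  shows "int_span A \<subseteq> H"
proof
  fix x assume "x \<in> int_span A"
  then show "x \<in> H"
    by (induction rule: int_span.induct) (use assms in \<open>auto simp: add_subgroup_def\<close>)
qed

lemma int_span_mono: "A \<subseteq> B \<Longrightarrow> int_span A \<subseteq> int_span B"
  by (meson add_subgroup_int_span int_span_least int_span_superset order_trans)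

lemma int_span_eq: "add_subgroup H \<Longrightarrow> int_span H = H"
  by (simp add: int_span_least int_span_superset subset_antisym)

lemma int_span_Un_subset:
  assumes "add_subgroup H"
  shows "int_span (H \<union> B) \<subseteq> H + int_span B"
proof (rule int_span_least)
  show "add_subgroup (H + int_span B)"
    by (simp add: add_subgroup_int_span add_subgroup_set_plus assms)
  have "H \<subseteq> H + int_span B"
    by (metis add.right_neutral int_span.zero set_plus_intro subsetI)
  moreover have "B \<subseteq> H + int_span B"
    using add_subgroup_zero[OF assms] int_span_superset
    by (metis add_0 set_plus_intro subset_iff)
  ultimately show "H \<union> B \<subseteq> H + int_span B"
    by blast
qed

primrec nat_mult :: "nat \<Rightarrow> 'a::monoid_add \<Rightarrow> 'a" where
  "nat_mult 0 z = 0"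
| "nat_mult (Suc k) z = z + nat_mult k z"

lemma nat_mult_add: "nat_mult (m + n) z = nat_mult m z + nat_mult n z"
  by (induction m) (simp_all add: add.assoc)

lemma add_subgroup_plus_nat_mults:
  assumes H: "add_subgroup H" and n: "0 < n" "nat_mult n z \<in> H"
  shows "add_subgroup {h + nat_mult r z | h r. h \<in> H \<and> r < n}" (is "add_subgroup ?T")
  unfolding add_subgroup_def
proof (intro conjI ballI)
  show "0 \<in> ?T"
    using add_subgroup_zero[OF H] n by force
  fix x y assume "x \<in> ?T" "y \<in> ?T"
  then obtain h r h' r' where hr: "x = h + nat_mult r z" "y = h' + nat_mult r' z"
    "h \<in> H" "h' \<in> H" "r < n" "r' < n"
    by blast
  show "x - y \<in> ?T"
  proof (cases "r' \<le> r")
    case True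
    then have "x - y = (h - h') + nat_mult (r - r') z"
      using hr nat_mult_add[of r' "r - r'" z] by (simp add: algebra_simps)
    then show ?thesis
      using hr add_subgroup_diff[OF H] by force
  next
    case False
    then have "x - y = (h - h' - nat_mult n z) + nat_mult (n + r - r') z"
      using hr nat_mult_add[of n r z] nat_mult_add[of r' "n + r - r'" z]
      by (simp add: algebra_simps)
    moreover have "n + r - r' < n"
      using False hr by simp
    ultimately show ?thesis
      using hr n add_subgroup_diff[OF H] by blast
  qed
qed

lemma int_span_insert_subset:
  assumes H: "add_subgroup H" and n: "0 < n" "nat_mult n z \<in> H"
  shows "int_span (insert z H) \<subseteq> {h + nat_mult r z | h r. h \<in> H \<and> r < n}"
    (is "_ \<subseteq> ?T")
proof (rule int_span_least[OF add_subgroup_plus_nat_mults[OF H n]])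
  have "z \<in> ?T"
  proof (cases "n = 1")
    case True
    then have "z \<in> H" "z = z + nat_mult 0 z"
      using n by simp_all
    then show ?thesis
      using n by blast
  next
    case False
    then have "z = 0 + nat_mult 1 z" "1 < n"
      using n by simp_all
    then show ?thesis
      using add_subgroup_zero[OF H] by blast
  qed
  moreover have "H \<subseteq> ?T"
    using n by force
  ultimately show "insert z H \<subseteq> ?T"
    by blast
qed

lemma int_span_insert_Int_subset:
  assumes H: "add_subgroup H" and K: "add_subgroup K" "H \<subseteq> K"
    and n: "0 < n" "nat_mult n z \<in> H"
    and below_n: "\<And>r. 0 < r \<Longrightarrow> r < n \<Longrightarrow> nat_mult r z \<notin> K"
  shows "int_span (insert z H) \<inter> K \<subseteq> H"
proof
  fix x assume x: "x \<in> int_span (insert z H) \<inter> K"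
  then obtain h r where hr: "h \<in> H" "r < n" "x = h + nat_mult r z"
    using int_span_insert_subset[OF H n] by blast
  then have "nat_mult r z \<in> K"
    using x K add_subgroup_diff[of K x h] by (auto simp: subset_iff)
  then have "r = 0"
    using below_n hr by blast
  then show "x \<in> H"
    using hr by simp
qed

lemma coset_eq_iff:
  assumes "add_subgroup N"
  shows "(+) x ` N = (+) y ` N \<longleftrightarrow> x - y \<in> N"
proof
  assume "(+) x ` N = (+) y ` N"
  moreover have "x \<in> (+) x ` N"
    using add_subgroup_zero[OF assms] by force
  ultimately obtain e where "e \<in> N" "x = y + e"
    by auto
  then show "x - y \<in> N"
    by simp
next
  assume xy: "x - y \<in> N"
  have "(+) x ` N = (+) y ` (+) (x - y) ` N"
    by (simp add: image_image algebra_simps)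
  also have "(+) (x - y) ` N = N"
  proof (intro equalityI subsetI)
    fix e assume "e \<in> N"
    then have "e - (x - y) \<in> N"
      using add_subgroup_diff[OF assms _ xy] by blast
    then show "e \<in> (+) (x - y) ` N"
      by (metis add.commute diff_add_cancel image_eqI)
  qed (use add_subgroup_add[OF assms xy] in blast)
  finally show "(+) x ` N = (+) y ` N" .
qed

lemma ex_nat_mult_mem_finite_index:
  assumes N: "add_subgroup N" and fin: "finite (add_cosets N)"
  shows "\<exists>n>0. nat_mult n z \<in> N"
proof -
  define c where "c k = (+) (nat_mult k z) ` N" for k
  have "range c \<subseteq> add_cosets N"
    unfolding c_def add_cosets_def by blast
  then have "\<not> inj c"
    using fin finite_imageD finite_subset infinite_UNIV_nat by blast
  then obtain i j where "i < j" "c i = c j"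
    unfolding inj_def by (metis linorder_neq_iff)
  then have "nat_mult i z - nat_mult j z \<in> N"
    unfolding c_def using coset_eq_iff[OF N] by blast
  moreover have "nat_mult j z = nat_mult i z + nat_mult (j - i) z"
    using \<open>i < j\<close> nat_mult_add[of i "j - i" z] by simp
  ultimately have "nat_mult (j - i) z \<in> N"
    using add_subgroup_uminus[OF N] by fastforce
  then show ?thesis
    using \<open>i < j\<close> zero_less_diff by blast
qed

lemma ZG_submodule_add_subgroup: "ZG_submodule G act M \<Longrightarrow> add_subgroup M"
  by (simp add: ZG_submodule_def add_subgroup_def)

lemma ZG_submodule_ZG_span: "ZG_submodule G act (ZG_span G act A)"
  unfolding ZG_span_def ZG_submodule_def by blast

lemma ZG_span_superset: "A \<subseteq> ZG_span G act A"
  unfolding ZG_span_def by blast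

lemma ZG_span_least: "ZG_submodule G act M \<Longrightarrow> A \<subseteq> M \<Longrightarrow> ZG_span G act A \<subseteq> M"
  unfolding ZG_span_def by blast

lemma ZG_span_mono: "A \<subseteq> B \<Longrightarrow> ZG_span G act A \<subseteq> ZG_span G act B"
  by (meson ZG_span_superset ZG_span_least ZG_submodule_ZG_span order_trans)

lemma ZG_submodule_act: "ZG_submodule G act M \<Longrightarrow> g \<in> carrier G \<Longrightarrow> x \<in> M \<Longrightarrow> act g x \<in> M"
  by (simp add: ZG_submodule_def)

lemma ZG_module_act_add: "ZG_module G act \<Longrightarrow> g \<in> carrier G \<Longrightarrow> act g (x + y) = act g x + act g y"
  by (simp add: ZG_module_def)

lemma ZG_module_act_zero: "ZG_module G act \<Longrightarrow> g \<in> carrier G \<Longrightarrow> act g 0 = 0"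
  unfolding ZG_module_def by (metis add_cancel_right_right add_0)

lemma ZG_module_act_diff:
  "ZG_module G act \<Longrightarrow> g \<in> carrier G \<Longrightarrow> act g (x - y) = act g x - act g y"
  unfolding ZG_module_def by (metis add_diff_cancel diff_add_cancel)

lemma ZG_module_act_inv_act:
  "group G \<Longrightarrow> ZG_module G act \<Longrightarrow> g \<in> carrier G \<Longrightarrow> act (inv\<^bsub>G\<^esub> g) (act g x) = x"
  unfolding ZG_module_def by (metis group.inv_closed group.l_inv)

lemma ZG_module_act_int_span:
  assumes "ZG_module G act" "g \<in> carrier G"
  shows "act g ` int_span A \<subseteq> int_span (act g ` A)"
proof clarify
  fix x assume "x \<in> int_span A"
  then show "act g x \<in> int_span (act g ` A)"
    by (induction rule: int_span.induct)
      (auto simp: ZG_module_act_zero[OF assms] ZG_module_act_diff[OF assms] intro: int_span.intros)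
qed

section \<open>Submodules of finite index\<close>

locale finite_index_submodule =
  fixes G :: "('g, 'b) monoid_scheme" and act :: "'g \<Rightarrow> 'm::ab_group_add \<Rightarrow> 'm"
    and N0 :: "'m set"
  assumes group: "group G" and module: "ZG_module G act"
    and submodule: "ZG_submodule G act N0" and finite_index: "finite (add_cosets N0)"
begin

lemma add_subgroup_N0: "add_subgroup N0"
  using submodule by (rule ZG_submodule_add_subgroup)

definition cosets_in :: "'m set \<Rightarrow> 'm set set" where
  "cosets_in W = (\<lambda>x. (+) x ` N0) ` W"

lemma cosets_in_subset: "cosets_in W \<subseteq> add_cosets N0"
  unfolding cosets_in_def add_cosets_def by blast

lemma finite_cosets_in: "finite (cosets_in W)"
  using cosets_in_subset finite_index by (rule finite_subset)

lemma card_cosets_in_le: "card (cosets_in W) \<le> card (add_cosets N0)"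
  using cosets_in_subset finite_index by (rule card_mono[rotated])

lemma card_cosets_in_double:
  assumes W: "add_subgroup W" "N0 \<subseteq> W" and z: "z \<notin> W"
    and W': "W \<subseteq> W'" "(+) z ` W \<subseteq> W'"
  shows "2 * card (cosets_in W) \<le> card (cosets_in W')"
proof -
  have shift: "cosets_in ((+) z ` W) = (`) ((+) z) ` cosets_in W"
    unfolding cosets_in_def image_image by (simp add: add.assoc)
  have "inj ((`) ((+) z))"
    by (rule injI) (simp add: inj_image_eq_iff)
  then have card_shift: "card (cosets_in ((+) z ` W)) = card (cosets_in W)"
    unfolding shift by (simp add: card_image inj_on_subset)
  have "cosets_in W \<inter> cosets_in ((+) z ` W) = {}"
  proof (rule ccontr)
    assume "cosets_in W \<inter> cosets_in ((+) z ` W) \<noteq> {}"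
    then obtain x y where "x \<in> W" "y \<in> W" "(+) x ` N0 = (+) (z + y) ` N0"
      unfolding cosets_in_def by auto
    then have "x - (z + y) \<in> W"
      using coset_eq_iff[OF add_subgroup_N0] W(2) by blast
    then have "x - (x - (z + y)) - y \<in> W"
      using add_subgroup_diff[OF W(1)] \<open>x \<in> W\<close> \<open>y \<in> W\<close> by blast
    then show False
      using z by simp
  qed
  then have "card (cosets_in W \<union> cosets_in ((+) z ` W)) = 2 * card (cosets_in W)"
    using card_shift by (simp add: card_Un_disjoint finite_cosets_in)
  moreover have "cosets_in W \<union> cosets_in ((+) z ` W) \<subseteq> cosets_in W'"
    unfolding cosets_in_def using W' by blast
  ultimately show ?thesis
    by (metis card_mono finite_cosets_in)
qed

lemma act_image_coset_plus_N0:
  assumes s: "s \<in> carrier G"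
  shows "act s ` ((+) x ` N0) + N0 = (+) (act s x) ` N0"
proof (intro equalityI subsetI)
  fix y assume "y \<in> act s ` ((+) x ` N0) + N0"
  then obtain e e' where "e \<in> N0" "e' \<in> N0" "y = act s (x + e) + e'"
    by (auto elim!: set_plus_elim)
  moreover have "act s e + e' \<in> N0"
    using calculation add_subgroup_add[OF add_subgroup_N0] ZG_submodule_act[OF submodule s]
    by blast
  ultimately show "y \<in> (+) (act s x) ` N0"
    by (force simp: ZG_module_act_add[OF module s] add.assoc)
next
  fix y assume "y \<in> (+) (act s x) ` N0"
  then obtain e where "e \<in> N0" "y = act s (x + 0) + e"
    by auto
  then show "y \<in> act s ` ((+) x ` N0) + N0"
    using add_subgroup_zero[OF add_subgroup_N0] by blast
qed

lemma act_surj_mod_N0: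
  assumes s: "s \<in> carrier G" and U: "add_subgroup U" "act s ` U \<subseteq> U" and u: "u \<in> U"
  shows "\<exists>u'\<in>U. u - act s u' \<in> N0"
proof -
  \<comment> \<open>the injective self-map of the finite set of cosets met by U induced by act s\<close>
  define F where "F c = act s ` c + N0" for c
  have F_coset: "F ((+) x ` N0) = (+) (act s x) ` N0" for x
    unfolding F_def by (rule act_image_coset_plus_N0[OF s])
  have "F ` cosets_in U \<subseteq> cosets_in U"
    using U(2) unfolding cosets_in_def image_image F_coset by blast
  moreover have "inj_on F (cosets_in U)"
  proof (rule inj_onI, unfold cosets_in_def, clarify)
    fix x y assume "x \<in> U" "y \<in> U" "F ((+) x ` N0) = F ((+) y ` N0)"
    then have "act s (x - y) \<in> N0"
      using coset_eq_iff[OF add_subgroup_N0] by (simp add: F_coset ZG_module_act_diff[OF module s])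
    then have "act (inv\<^bsub>G\<^esub> s) (act s (x - y)) \<in> N0"
      using ZG_submodule_act[OF submodule] group s by (simp add: group.inv_closed)
    then show "(+) x ` N0 = (+) y ` N0"
      using coset_eq_iff[OF add_subgroup_N0] ZG_module_act_inv_act[OF group module s] by simp
  qed
  ultimately have "F ` cosets_in U = cosets_in U"
    by (simp add: endo_inj_surj finite_cosets_in)
  then obtain u' where "u' \<in> U" "(+) u ` N0 = (+) (act s u') ` N0"
    using u unfolding cosets_in_def image_image F_coset by blast
  then show ?thesis
    using coset_eq_iff[OF add_subgroup_N0] by blast
qed

lemma act_inv_image_subset:
  assumes s: "s \<in> carrier G" and U: "add_subgroup U" "act s ` U \<subseteq> U"
    and V: "ZG_submodule G act V" "V \<subseteq> U" "U \<inter> N0 \<subseteq> V"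
  shows "act (inv\<^bsub>G\<^esub> s) ` U \<subseteq> U"
proof clarify
  fix u assume "u \<in> U"
  then obtain u' where u': "u' \<in> U" "u - act s u' \<in> N0"
    using act_surj_mod_N0[OF s U] by blast
  have inv_s: "inv\<^bsub>G\<^esub> s \<in> carrier G"
    using group s by (simp add: group.inv_closed)
  have "u - act s u' \<in> V"
    using u' \<open>u \<in> U\<close> U V(3) add_subgroup_diff[OF U(1)] by blast
  then have "act (inv\<^bsub>G\<^esub> s) (u - act s u') \<in> U"
    using ZG_submodule_act[OF V(1) inv_s] V(2) by blast
  moreover have "act (inv\<^bsub>G\<^esub> s) u = u' + act (inv\<^bsub>G\<^esub> s) (u - act s u')"
    by (simp add: ZG_module_act_diff[OF module inv_s] ZG_module_act_inv_act[OF group module s])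
  ultimately show "act (inv\<^bsub>G\<^esub> s) u \<in> U"
    using u' add_subgroup_add[OF U(1)] by simp
qed

lemma ZG_submodule_if_generators_preserve:
  assumes S: "S \<subseteq> carrier G" "generate G S = carrier G"
    and U: "add_subgroup U" "\<forall>s\<in>S. act s ` U \<subseteq> U"
    and V: "ZG_submodule G act V" "V \<subseteq> U" "U \<inter> N0 \<subseteq> V"
  shows "ZG_submodule G act U"
proof -
  have "act g ` U \<subseteq> U" if "g \<in> generate G S" for g
    using that
  proof (induction rule: generate.induct)
    case one
    then show ?case
      using module by (simp add: ZG_module_def)
  next
    case (incl h)
    then show ?case
      using U(2) by blast
  next
    case (inv h)
    then show ?case
      using act_inv_image_subset U V S(1) by blast
  next
    case (eng h1 h2)
    then have "act (h1 \<otimes>\<^bsub>G\<^esub> h2) = act h1 \<circ> act h2"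
      using module S(2) by (auto simp: ZG_module_def)
    then show ?case
      using eng.IH by (fastforce simp: image_comp)
  qed
  then show ?thesis
    using U(1) S(2) unfolding ZG_submodule_def add_subgroup_def by blast
qed

lemma ZG_span_subset_N0: "R \<subseteq> N0 \<Longrightarrow> ZG_span G act R \<subseteq> N0"
  using submodule by (rule ZG_span_least)

subsection \<open>The doubling construction\<close>

definition mixed_span :: "'m set \<Rightarrow> 'm set \<Rightarrow> 'm set" where
  "mixed_span R Y = int_span (ZG_span G act R \<union> Y)"

lemma add_subgroup_mixed_span: "add_subgroup (mixed_span R Y)"
  unfolding mixed_span_def by (rule add_subgroup_int_span)

lemma ZG_span_subset_mixed_span: "ZG_span G act R \<subseteq> mixed_span R Y"
  unfolding mixed_span_def using int_span_superset by blast

lemma subset_mixed_span: "Y \<subseteq> mixed_span R Y"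
  unfolding mixed_span_def using int_span_superset by blast

lemma mixed_span_mono: "R \<subseteq> R' \<Longrightarrow> Y \<subseteq> Y' \<Longrightarrow> mixed_span R Y \<subseteq> mixed_span R' Y'"
  unfolding mixed_span_def by (intro int_span_mono Un_mono ZG_span_mono)

lemma mixed_span_Int_N0_mono:
  assumes "R \<subseteq> R'" "R' \<subseteq> N0" and R: "mixed_span R Y \<inter> N0 \<subseteq> ZG_span G act R"
  shows "mixed_span R' Y \<inter> N0 \<subseteq> ZG_span G act R'"
proof
  fix p assume p: "p \<in> mixed_span R' Y \<inter> N0"
  then obtain v u where vu: "v \<in> ZG_span G act R'" "u \<in> int_span Y" "p = v + u"
    using int_span_Un_subset[OF ZG_submodule_add_subgroup[OF ZG_submodule_ZG_span]]
    unfolding mixed_span_def by (blast elim: set_plus_elim)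
  have "u \<in> mixed_span R Y"
    using vu(2) int_span_mono[of Y] unfolding mixed_span_def by blast
  moreover have "u \<in> N0"
    using vu p ZG_span_subset_N0[OF assms(2)] add_subgroup_diff[OF add_subgroup_N0, of p v]
    by (simp add: algebra_simps subset_iff)
  ultimately have "u \<in> ZG_span G act R'"
    using R ZG_span_mono[OF assms(1)] by blast
  then show "p \<in> ZG_span G act R'"
    using vu add_subgroup_add[OF ZG_submodule_add_subgroup[OF ZG_submodule_ZG_span]] by blast
qed

definition admissible :: "'m set \<Rightarrow> 'm set \<Rightarrow> bool" where
  "admissible R Y \<longleftrightarrow> finite R \<and> R \<subseteq> N0 \<and> finite Y \<and> card R \<le> card Y \<and>
     mixed_span R Y \<inter> N0 \<subseteq> ZG_span G act R \<and>
     2 ^ card Y \<le> card (cosets_in (mixed_span R Y + N0))"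

lemma add_subgroup_plus_N0: "add_subgroup (mixed_span R Y + N0)"
  by (simp add: add_subgroup_set_plus add_subgroup_mixed_span add_subgroup_N0)

lemma N0_subset_plus_N0: "N0 \<subseteq> mixed_span R Y + N0"
  using add_subgroup_zero[OF add_subgroup_mixed_span] by (metis set_zero_plus2)

lemma mixed_span_subset_plus_N0: "mixed_span R Y \<subseteq> mixed_span R Y + N0"
  using add_subgroup_zero[OF add_subgroup_N0] by (metis add.commute set_zero_plus2)

lemma admissible_empty: "admissible {} {}"
proof -
  have "mixed_span {} {} = ZG_span G act {}"
    unfolding mixed_span_def
    by (simp add: int_span_eq ZG_submodule_add_subgroup[OF ZG_submodule_ZG_span])
  moreover have "cosets_in (mixed_span {} {} + N0) \<noteq> {}"
    using N0_subset_plus_N0 add_subgroup_zero[OF add_subgroup_N0]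
    unfolding cosets_in_def by blast
  ultimately show ?thesis
    unfolding admissible_def using finite_cosets_in
    by (simp add: Suc_le_eq card_gt_0_iff)
qed

lemma mixed_span_insert_Int_N0:
  assumes R: "R \<subseteq> N0" "mixed_span R Y \<inter> N0 \<subseteq> ZG_span G act R" and a: "a \<in> N0"
    and n: "0 < n" "nat_mult n z - a \<in> mixed_span R Y"
    and below_n: "\<And>r. 0 < r \<Longrightarrow> r < n \<Longrightarrow> nat_mult r z \<notin> mixed_span R Y + N0"
  shows "mixed_span (insert a R) (insert z Y) \<inter> N0 \<subseteq> ZG_span G act (insert a R)"
proof -
  define W where "W = mixed_span R Y + N0"
  have W: "add_subgroup W" "N0 \<subseteq> W" "mixed_span R Y \<subseteq> W"
    unfolding W_def by (simp_all add: add_subgroup_plus_N0 N0_subset_plus_N0 mixed_span_subset_plus_N0)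
  define H where "H = mixed_span (insert a R) Y"
  have H: "add_subgroup H" "H \<subseteq> W" "nat_mult n z \<in> H"
  proof -
    show "add_subgroup H"
      unfolding H_def by (rule add_subgroup_mixed_span)
    show "H \<subseteq> W"
      unfolding H_def mixed_span_def
    proof (rule int_span_least[OF W(1)])
      have "ZG_span G act (insert a R) \<subseteq> N0"
        using a R(1) by (simp add: ZG_span_subset_N0)
      then show "ZG_span G act (insert a R) \<union> Y \<subseteq> W"
        using W(2,3) subset_mixed_span[of Y R] by blast
    qed
    have "nat_mult n z - a \<in> H"
      unfolding H_def using n(2) mixed_span_mono[OF subset_insertI order_refl] by blast
    moreover have "a \<in> H"
      unfolding H_def
      using ZG_span_subset_mixed_span[of "insert a R" Y] ZG_span_superset[of "insert a R" G act]
      by blast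
    ultimately have "(nat_mult n z - a) + a \<in> H"
      by (rule add_subgroup_add[OF \<open>add_subgroup H\<close>])
    then show "nat_mult n z \<in> H"
      by simp
  qed
  have "mixed_span (insert a R) (insert z Y) \<subseteq> int_span (insert z H)"
    unfolding mixed_span_def[of _ "insert z Y"]
  proof (rule int_span_mono)
    have "ZG_span G act (insert a R) \<subseteq> H" "Y \<subseteq> H"
      unfolding H_def by (rule ZG_span_subset_mixed_span, rule subset_mixed_span)
    then show "ZG_span G act (insert a R) \<union> insert z Y \<subseteq> insert z H"
      by blast
  qed
  then have "mixed_span (insert a R) (insert z Y) \<inter> N0 \<subseteq> H \<inter> N0"
    using int_span_insert_Int_subset[OF H(1) W(1) H(2) n(1) H(3) below_n[folded W_def]] W(2)
    by blast
  also have "\<dots> \<subseteq> ZG_span G act (insert a R)"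
    unfolding H_def using mixed_span_Int_N0_mono[OF _ _ R(2)] R(1) a by blast
  finally show ?thesis .
qed

lemma card_cosets_in_insert:
  assumes z: "z \<notin> mixed_span R Y + N0"
  shows "2 * card (cosets_in (mixed_span R Y + N0))
    \<le> card (cosets_in (mixed_span (insert a R) (insert z Y) + N0))"
proof (rule card_cosets_in_double[OF add_subgroup_plus_N0 N0_subset_plus_N0 z])
  have grow: "mixed_span R Y \<subseteq> mixed_span (insert a R) (insert z Y)"
    by (rule mixed_span_mono) blast+
  then show "mixed_span R Y + N0 \<subseteq> mixed_span (insert a R) (insert z Y) + N0"
    by (rule set_plus_mono2[OF _ order_refl])
  show "(+) z ` (mixed_span R Y + N0) \<subseteq> mixed_span (insert a R) (insert z Y) + N0"
  proof clarify
    fix w assume "w \<in> mixed_span R Y + N0"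
    then obtain v e where "v \<in> mixed_span R Y" "e \<in> N0" "w = v + e"
      by (blast elim: set_plus_elim)
    moreover have "z + v \<in> mixed_span (insert a R) (insert z Y)"
      using calculation(1) grow subset_mixed_span add_subgroup_add[OF add_subgroup_mixed_span]
      by blast
    ultimately show "z + w \<in> mixed_span (insert a R) (insert z Y) + N0"
      by (metis add.assoc set_plus_intro)
  qed
qed

lemma admissible_insert:
  assumes adm: "admissible R Y" and z: "z \<notin> mixed_span R Y + N0"
  shows "\<exists>a. admissible (insert a R) (insert z Y)"
proof -
  have "\<exists>n. 0 < n \<and> nat_mult n z \<in> mixed_span R Y + N0"
    using ex_nat_mult_mem_finite_index[OF add_subgroup_N0 finite_index] N0_subset_plus_N0
    by blast
  then obtain n where n: "0 < n" "nat_mult n z \<in> mixed_span R Y + N0"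
    and below_n: "\<And>r. 0 < r \<Longrightarrow> r < n \<Longrightarrow> nat_mult r z \<notin> mixed_span R Y + N0"
    unfolding exists_least_iff[of "\<lambda>n. 0 < n \<and> nat_mult n z \<in> mixed_span R Y + N0"]
    by blast
  then obtain u a where ua: "u \<in> mixed_span R Y" "a \<in> N0" "nat_mult n z = u + a"
    by (blast elim: set_plus_elim)
  have R: "finite R" "R \<subseteq> N0" "finite Y" "card R \<le> card Y"
    "mixed_span R Y \<inter> N0 \<subseteq> ZG_span G act R"
    "2 ^ card Y \<le> card (cosets_in (mixed_span R Y + N0))"
    using adm unfolding admissible_def by auto
  have "mixed_span (insert a R) (insert z Y) \<inter> N0 \<subseteq> ZG_span G act (insert a R)"
    by (rule mixed_span_insert_Int_N0[OF R(2,5) ua(2) n(1) _ below_n]) (use ua in simp)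
  moreover have "z \<notin> Y"
    using z subset_mixed_span mixed_span_subset_plus_N0 by blast
  ultimately have "admissible (insert a R) (insert z Y)"
    unfolding admissible_def using R ua(2) card_cosets_in_insert[OF z, of a]
    by (simp add: card_insert_if)
  then show ?thesis ..
qed

lemma ex_admissible_covering:
  "\<exists>R Y. admissible R Y \<and> X \<union> (\<Union>s\<in>S. act s ` Y) \<subseteq> mixed_span R Y + N0"
proof -
  have bounded: "card Y < card (add_cosets N0) + 1" if "admissible R Y" for R Y
  proof -
    have "card Y < 2 ^ card Y"
      by (rule less_exp)
    also have "\<dots> \<le> card (add_cosets N0)"
      using that card_cosets_in_le unfolding admissible_def by (meson order_trans)
    finally show ?thesis
      by simp
  qed
  have "\<exists>p. admissible (fst p) (snd p) \<and>
      (\<forall>q. admissible (fst q) (snd q) \<longrightarrow> card (snd q) \<le> card (snd p))"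
    by (rule ex_has_greatest_nat[where k = "({}, {})" and b = "card (add_cosets N0) + 1"])
      (use admissible_empty bounded in auto)
  then obtain R Y where adm: "admissible R Y"
    and maximal: "\<And>R' Y'. admissible R' Y' \<Longrightarrow> card Y' \<le> card Y"
    by (metis fst_conv snd_conv)
  have "z \<in> mixed_span R Y + N0" if "z \<in> X \<union> (\<Union>s\<in>S. act s ` Y)" for z
  proof (rule ccontr)
    assume z: "z \<notin> mixed_span R Y + N0"
    then obtain a where "admissible (insert a R) (insert z Y)"
      using admissible_insert[OF adm] by blast
    moreover have "z \<notin> Y" "finite Y"
      using z subset_mixed_span mixed_span_subset_plus_N0 adm unfolding admissible_def by blast+
    ultimately show False
      using maximal[of "insert a R" "insert z Y"] by simp
  qed
  then show ?thesis
    using adm by blast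
qed

lemma ex_extension_covering:
  assumes R: "R \<subseteq> N0" "mixed_span R Y \<inter> N0 \<subseteq> ZG_span G act R"
    and Z: "finite Z" "Z \<subseteq> mixed_span R Y + N0"
  shows "\<exists>A. finite A \<and> card A \<le> card Z \<and> A \<subseteq> N0 \<and> Z \<subseteq> mixed_span (R \<union> A) Y \<and>
    mixed_span (R \<union> A) Y \<inter> N0 \<subseteq> ZG_span G act (R \<union> A)"
proof -
  have "\<forall>z\<in>Z. \<exists>e. e \<in> N0 \<and> z - e \<in> mixed_span R Y"
    using Z(2) by (force elim: set_plus_elim)
  then obtain e where e: "\<And>z. z \<in> Z \<Longrightarrow> e z \<in> N0 \<and> z - e z \<in> mixed_span R Y"
    by metis
  define A where "A = e ` Z"
  have A: "A \<subseteq> N0"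
    unfolding A_def using e by blast
  have "z \<in> mixed_span (R \<union> A) Y" if "z \<in> Z" for z
  proof -
    have "z - e z \<in> mixed_span (R \<union> A) Y"
      using e[OF that] mixed_span_mono[of R "R \<union> A" Y Y] by blast
    moreover have "e z \<in> mixed_span (R \<union> A) Y"
      using that ZG_span_subset_mixed_span[of "R \<union> A" Y] ZG_span_superset[of "R \<union> A" G act]
      unfolding A_def by blast
    ultimately have "(z - e z) + e z \<in> mixed_span (R \<union> A) Y"
      by (rule add_subgroup_add[OF add_subgroup_mixed_span])
    then show ?thesis
      by simp
  qed
  moreover have "mixed_span (R \<union> A) Y \<inter> N0 \<subseteq> ZG_span G act (R \<union> A)"
    by (rule mixed_span_Int_N0_mono[OF _ _ R(2)]) (use R(1) A in auto)
  moreover have "finite A" "card A \<le> card Z"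
    unfolding A_def using Z(1) by (simp_all add: card_image_le)
  ultimately show ?thesis
    using A by blast
qed

lemma ZG_span_eq_N0_if_covering:
  assumes S: "S \<subseteq> carrier G" "generate G S = carrier G"
    and X: "ZG_span G act X = UNIV"
    and R: "R \<subseteq> N0" "mixed_span R Y \<inter> N0 \<subseteq> ZG_span G act R"
    and cover: "X \<union> (\<Union>s\<in>S. act s ` Y) \<subseteq> mixed_span R Y"
  shows "ZG_span G act R = N0"
proof -
  have "act s ` mixed_span R Y \<subseteq> mixed_span R Y" if s: "s \<in> S" for s
  proof -
    have "act s ` mixed_span R Y \<subseteq> int_span (act s ` (ZG_span G act R \<union> Y))"
      unfolding mixed_span_def by (rule ZG_module_act_int_span[OF module]) (use S(1) s in blast)
    also have "\<dots> \<subseteq> mixed_span R Y"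
    proof (rule int_span_least[OF add_subgroup_mixed_span])
      have "act s ` ZG_span G act R \<subseteq> ZG_span G act R"
        using ZG_submodule_act[OF ZG_submodule_ZG_span[of G act R]] S(1) s by blast
      then show "act s ` (ZG_span G act R \<union> Y) \<subseteq> mixed_span R Y"
        using ZG_span_subset_mixed_span[of R Y] cover s by blast
    qed
    finally show ?thesis .
  qed
  then have "ZG_submodule G act (mixed_span R Y)"
    using ZG_submodule_if_generators_preserve[OF S add_subgroup_mixed_span _
        ZG_submodule_ZG_span ZG_span_subset_mixed_span R(2)]
    by blast
  then have "ZG_span G act X \<subseteq> mixed_span R Y"
    by (rule ZG_span_least) (use cover in blast)
  then have "N0 \<subseteq> ZG_span G act R"
    using X R(2) by blast
  then show ?thesis
    using ZG_span_subset_N0[OF R(1)] by blast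
qed

theorem ex_small_generating_set:
  assumes S: "finite S" "S \<subseteq> carrier G" "generate G S = carrier G"
    and X: "finite X" "ZG_span G act X = UNIV"
  shows "\<exists>R m. finite R \<and> ZG_span G act R = N0 \<and> 2 ^ m \<le> card (add_cosets N0) \<and>
    card R \<le> card X + (card S + 1) * m"
proof -
  define Z where "Z Y = X \<union> (\<Union>s\<in>S. act s ` Y)" for Y
  obtain R Y where adm: "admissible R Y" and cover: "Z Y \<subseteq> mixed_span R Y + N0"
    using ex_admissible_covering[of X S] unfolding Z_def by blast
  then have R: "finite R" "R \<subseteq> N0" "finite Y" "card R \<le> card Y"
    "mixed_span R Y \<inter> N0 \<subseteq> ZG_span G act R" "2 ^ card Y \<le> card (add_cosets N0)"
    unfolding admissible_def using card_cosets_in_le[of "mixed_span R Y + N0"] by auto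
  have card_Z: "card (Z Y) \<le> card X + card S * card Y"
  proof -
    have "card (\<Union>s\<in>S. act s ` Y) \<le> (\<Sum>s\<in>S. card (act s ` Y))"
      using S(1) by (rule card_UN_le)
    also have "\<dots> \<le> (\<Sum>s\<in>S. card Y)"
      by (rule sum_mono) (rule card_image_le[OF R(3)])
    finally show ?thesis
      unfolding Z_def using card_Un_le[of X "\<Union>s\<in>S. act s ` Y"] by simp
  qed
  have "finite (Z Y)"
    unfolding Z_def using X(1) S(1) R(3) by blast
  then obtain A where A: "finite A" "card A \<le> card (Z Y)" "A \<subseteq> N0" "Z Y \<subseteq> mixed_span (R \<union> A) Y"
    "mixed_span (R \<union> A) Y \<inter> N0 \<subseteq> ZG_span G act (R \<union> A)"
    using ex_extension_covering[OF R(2,5) _ cover] by blast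
  have "ZG_span G act (R \<union> A) = N0"
    using ZG_span_eq_N0_if_covering[OF S(2,3) X(2) _ A(5)] R(2) A(3,4) unfolding Z_def by blast
  moreover have "card (R \<union> A) \<le> card X + (card S + 1) * card Y"
    using card_Un_le[of R A] R(4) A(2) card_Z by simp
  ultimately show ?thesis
    using R(1,6) A(1) by blast
qed

end

theorem lemma3:
  fixes G :: "('g, 'b) monoid_scheme"
    and act :: "'g \<Rightarrow> 'm::ab_group_add \<Rightarrow> 'm"
    and N0 :: "'m set" and d t b :: nat
  assumes "group G"
    and "\<exists>S. finite S \<and> card S \<le> d \<and> S \<subseteq> carrier G \<and> generate G S = carrier G"
    and "ZG_module G act"
    and "\<exists>X. finite X \<and> card X \<le> t \<and> ZG_span G act X = UNIV"
    and "ZG_submodule G act N0"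
    and "finite (add_cosets N0)" and "b = card (add_cosets N0)"
  shows "\<exists>Y. finite Y \<and> ZG_span G act Y = N0 \<and>
           real (card Y) \<le> real t + (2 * real d + 1) * log 2 (real b)"
proof -
  interpret finite_index_submodule G act N0
    using assms(1,3,5,6) by (rule finite_index_submodule.intro)
  obtain S where S: "finite S" "card S \<le> d" "S \<subseteq> carrier G" "generate G S = carrier G"
    using assms(2) by blast
  obtain X where X: "finite X" "card X \<le> t" "ZG_span G act X = UNIV"
    using assms(4) by blast
  obtain Y m where Y: "finite Y" "ZG_span G act Y = N0" "2 ^ m \<le> b"
    "card Y \<le> card X + (card S + 1) * m"
    using ex_small_generating_set[OF S(1,3,4) X(1,3)] assms(7) by blast
  have m: "real m \<le> log 2 (real b)"
    using Y(3) by (rule le_log2_of_power)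
  have "card Y \<le> t + (d + 1) * m"
    using Y(4) X(2) S(2) mult_right_mono[of "card S + 1" "d + 1" m] by linarith
  then have "real (card Y) \<le> real t + (real d + 1) * real m"
    by (metis of_nat_add of_nat_le_iff of_nat_mult of_nat_1)
  also have "\<dots> \<le> real t + (2 * real d + 1) * log 2 (real b)"
    using m by (simp add: mult_mono)
  finally show ?thesis
    using Y(1,2) by blast
qed

end
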